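(* If $(X,d)$ is a finite metric space of cardinality $n$, then there exists $\alpha\in(0,1)$ such that $(X,d^\alpha)$ admits an isometric embedding into the Euclidean space $\mathbb R^n$.
   Context: For a metric space $(X,d)$ and $\alpha\in(0,1)$, $d^\alpha$ denotes the metric $(x,y)\mapsto d(x,y)^\alpha$. *)

theory Defs
  imports "HOL-Analysis.Analysis"
begin

definition metric_on :: "'a set \<Rightarrow> ('a \<Rightarrow> 'a \<Rightarrow> real) \<Rightarrow> bool" where
  "metric_on X d \<longleftrightarrow>
     (\<forall>x\<in>X. \<forall>y\<in>X. 0 \<le> d x y \<and> (d x y = 0 \<longleftrightarrow> x = y) \<and> d x y = d y x) \<and>
     (\<forall>x\<in>X. \<forall>y\<in>X. \<forall>z\<in>X. d x z \<le> d x y + d y z)"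

definition isometric_embedding :: "'a set \<Rightarrow> ('a \<Rightarrow> 'a \<Rightarrow> real) \<Rightarrow> ('a \<Rightarrow> 'b::metric_space) \<Rightarrow> bool" where
  "isometric_embedding X d f \<longleftrightarrow> (\<forall>x\<in>X. \<forall>y\<in>X. dist (f x) (f y) = d x y)"

end

theory Submission
  imports Defs
begin

text \<open>For small \<open>\<alpha>\<close> all nonzero distances of \<open>d\<^sup>\<alpha>\<close> are close to 1, so the matrix
  \<open>G x y = (1 - d(x,y)^(2\<alpha>)) / 2\<close> is close to half the identity and hence positive definite.
  A Cholesky factorisation writes \<open>G\<close> as the Gram matrix of \<open>n\<close> vectors \<open>f x\<close> in \<open>\<real>\<^sup>n\<close>, and
  since \<open>G x x = 1/2\<close> they satisfy \<open>\<parallel>f x - f y\<parallel>\<^sup>2 = G x x + G y y - 2 G x y = d(x,y)^(2\<alpha>)\<close>.\<close>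

definition quadratic_form :: "'a set \<Rightarrow> ('a \<Rightarrow> 'a \<Rightarrow> real) \<Rightarrow> ('a \<Rightarrow> real) \<Rightarrow> real" where
  "quadratic_form S G x = (\<Sum>i\<in>S. \<Sum>j\<in>S. x i * x j * G i j)"

definition pos_def_on :: "'a set \<Rightarrow> ('a \<Rightarrow> 'a \<Rightarrow> real) \<Rightarrow> bool" where
  "pos_def_on S G \<longleftrightarrow> (\<forall>x. (\<exists>i\<in>S. x i \<noteq> 0) \<longrightarrow> quadratic_form S G x > 0)"

definition symmetric_on :: "'a set \<Rightarrow> ('a \<Rightarrow> 'a \<Rightarrow> real) \<Rightarrow> bool" where
  "symmetric_on S G \<longleftrightarrow> (\<forall>i\<in>S. \<forall>j\<in>S. G i j = G j i)"

lemma quadratic_form_insert: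
  assumes "finite S" "a \<notin> S" "symmetric_on (insert a S) G"
  shows "quadratic_form (insert a S) G x =
    x a * x a * G a a + 2 * x a * (\<Sum>j\<in>S. G a j * x j) + quadratic_form S G x"
proof -
  have "quadratic_form (insert a S) G x = x a * x a * G a a + (\<Sum>j\<in>S. x a * x j * G a j)
      + (\<Sum>i\<in>S. x i * x a * G i a) + quadratic_form S G x"
    using assms(1,2) by (simp add: quadratic_form_def sum.distrib)
  moreover have "(\<Sum>i\<in>S. x i * x a * G i a) = x a * (\<Sum>j\<in>S. G a j * x j)"
  proof (unfold sum_distrib_left, rule sum.cong)
    fix i assume "i \<in> S"
    then have "G i a = G a i"
      using assms(3) unfolding symmetric_on_def by blast
    then show "x i * x a * G i a = x a * (G a i * x i)"
      by simp
  qed simp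
  moreover have "(\<Sum>j\<in>S. x a * x j * G a j) = x a * (\<Sum>j\<in>S. G a j * x j)"
    unfolding sum_distrib_left by (intro sum.cong) auto
  ultimately show ?thesis
    by simp
qed

lemma pos_def_on_diag_pos:
  assumes "finite S" "pos_def_on S G" "a \<in> S"
  shows "G a a > 0"
proof -
  have "quadratic_form S G (\<lambda>i. of_bool (i = a)) > 0"
    using assms(2,3) unfolding pos_def_on_def by force
  also have "quadratic_form S G (\<lambda>i. of_bool (i = a)) =
      (\<Sum>i\<in>S. of_bool (i = a) * (\<Sum>j\<in>S. of_bool (j = a) * G i j))"
    by (simp add: quadratic_form_def sum_distrib_left mult.assoc)
  also have "\<dots> = G a a"
    using assms(1,3) by simp
  finally show ?thesis .
qed

lemma pos_def_on_schur_complement: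
  assumes "finite S" "a \<notin> S" "symmetric_on (insert a S) G" "pos_def_on (insert a S) G"
  shows "pos_def_on S (\<lambda>i j. G i j - G a i * G a j / G a a)"
  unfolding pos_def_on_def
proof (intro allI impI)
  fix y :: "'a \<Rightarrow> real"
  assume "\<exists>i\<in>S. y i \<noteq> 0"
  define g where "g = G a a"
  define b where "b = (\<Sum>j\<in>S. G a j * y j)"
  define x where "x = y(a := - b / g)"
  have "g > 0"
    using pos_def_on_diag_pos[of "insert a S" G a] assms(1,4) by (simp add: g_def)
  have x_a: "x a = - b / g" and x_S: "\<And>i. i \<in> S \<Longrightarrow> x i = y i"
    using \<open>a \<notin> S\<close> by (auto simp: x_def)
  have "\<exists>i\<in>insert a S. x i \<noteq> 0"
    using \<open>\<exists>i\<in>S. y i \<noteq> 0\<close> x_S by auto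
  then have pos: "quadratic_form (insert a S) G x > 0"
    using assms(4) unfolding pos_def_on_def by blast
  have "quadratic_form S G x = quadratic_form S G y"
    unfolding quadratic_form_def using x_S by (intro sum.cong refl) auto
  moreover have "(\<Sum>j\<in>S. G a j * x j) = b"
    unfolding b_def using x_S by (intro sum.cong refl) auto
  ultimately have "quadratic_form (insert a S) G x =
      (- b / g) * (- b / g) * g + 2 * (- b / g) * b + quadratic_form S G y"
    using quadratic_form_insert[OF assms(1-3), of x] by (simp only: x_a g_def)
  also have "\<dots> = quadratic_form S G y - b * b / g"
    using \<open>g > 0\<close> by (simp add: field_simps)
  also have "b * b / g = (\<Sum>i\<in>S. \<Sum>j\<in>S. y i * y j * (G a i * G a j / g))"
    unfolding b_def by (simp add: sum_product sum_divide_distrib mult_ac)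
  also have "quadratic_form S G y - \<dots> = quadratic_form S (\<lambda>i j. G i j - G a i * G a j / g) y"
    by (simp add: quadratic_form_def sum_subtractf right_diff_distrib)
  finally show "quadratic_form S (\<lambda>i j. G i j - G a i * G a j / G a a) y > 0"
    using pos by (simp add: g_def)
qed

lemma pos_def_on_gram_factorisation:
  assumes "finite S" "symmetric_on S G" "pos_def_on S G"
  shows "\<exists>v. \<forall>i\<in>S. \<forall>j\<in>S. (\<Sum>k\<in>S. v i k * v j k) = G i j"
  using assms
proof (induction S arbitrary: G rule: finite_induct)
  case empty
  then show ?case by simp
next
  case (insert a S)
  define g where "g = G a a"
  define H where "H = (\<lambda>i j. G i j - G a i * G a j / g)"
  have "g > 0"
    using pos_def_on_diag_pos[of "insert a S" G a] insert.hyps(1) insert.prems(2) by (simp add: g_def)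
  have G_sym: "G i j = G j i" if "i \<in> insert a S" "j \<in> insert a S" for i j
    using insert.prems(1) that unfolding symmetric_on_def by blast
  have "symmetric_on S H"
    unfolding symmetric_on_def H_def by (metis G_sym insertCI mult.commute)
  moreover have "pos_def_on S H"
    using pos_def_on_schur_complement[OF insert.hyps insert.prems] unfolding H_def g_def .
  ultimately obtain w where w: "\<forall>i\<in>S. \<forall>j\<in>S. (\<Sum>k\<in>S. w i k * w j k) = H i j"
    using insert.IH by blast
  define v where "v i k = (if k = a then (if i = a then sqrt g else G a i / sqrt g)
      else if i = a then 0 else w i k)" for i k
  have "(\<Sum>k\<in>insert a S. v i k * v j k) = G i j" if "i \<in> insert a S" "j \<in> insert a S" for i j
  proof -
    have "(\<Sum>k\<in>insert a S. v i k * v j k) = v i a * v j a + (\<Sum>k\<in>S. v i k * v j k)"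
      using insert.hyps by simp
    moreover have "(\<Sum>k\<in>S. v i k * v j k) = (if i = a \<or> j = a then 0 else H i j)"
    proof -
      have "v i' k = (if i' = a then 0 else w i' k)" if "k \<in> S" for i' k
        using that insert.hyps(2) by (auto simp: v_def)
      then show ?thesis
        using w \<open>i \<in> insert a S\<close> \<open>j \<in> insert a S\<close> by auto
    qed
    moreover have "G i a = G a i"
      using G_sym that by blast
    ultimately show ?thesis
      using \<open>g > 0\<close> by (auto simp: v_def H_def g_def real_sqrt_mult[symmetric])
  qed
  then show ?case by blast
qed

text \<open>The deviation from \<open>c\<close> times the identity contributes at most \<open>n e \<parallel>x\<parallel>\<^sup>2\<close> to the
  quadratic form, because \<open>\<bar>x i x j\<bar> \<le> (x i\<^sup>2 + x j\<^sup>2) / 2\<close>.\<close>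

lemma pos_def_on_near_scaled_identity:
  assumes "finite S" "real (card S) * e < c"
    and near: "\<forall>i\<in>S. \<forall>j\<in>S. \<bar>G i j - (if i = j then c else 0)\<bar> \<le> e"
  shows "pos_def_on S G"
  unfolding pos_def_on_def
proof (intro allI impI)
  fix x :: "'a \<Rightarrow> real"
  assume "\<exists>i\<in>S. x i \<noteq> 0"
  define N where "N = (\<Sum>i\<in>S. (x i)\<^sup>2)"
  define F where "F i j = G i j - (if i = j then c else 0)" for i j
  have "N > 0"
    using \<open>\<exists>i\<in>S. x i \<noteq> 0\<close> assms(1) unfolding N_def by (metis sum_pos2 zero_le_power2 zero_less_power2)
  have "quadratic_form S G x =
      (\<Sum>i\<in>S. \<Sum>j\<in>S. x i * x j * (if i = j then c else 0)) + quadratic_form S F x"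
    unfolding quadratic_form_def F_def by (simp add: sum.distrib[symmetric] algebra_simps)
  also have "(\<Sum>i\<in>S. \<Sum>j\<in>S. x i * x j * (if i = j then c else 0)) = c * N"
    using assms(1) by (simp add: N_def sum_distrib_left power2_eq_square mult_ac if_distrib cong: if_cong)
  finally have "quadratic_form S G x = c * N + quadratic_form S F x" .
  moreover have "\<bar>quadratic_form S F x\<bar> \<le> real (card S) * e * N"
  proof -
    have term_bound: "\<bar>x i * x j * F i j\<bar> \<le> ((x i)\<^sup>2 + (x j)\<^sup>2) / 2 * e" if "i \<in> S" "j \<in> S" for i j
    proof -
      have "\<bar>x i * x j\<bar> \<le> ((x i)\<^sup>2 + (x j)\<^sup>2) / 2"
        using sum_squares_bound[of "\<bar>x i\<bar>" "\<bar>x j\<bar>"] by (simp add: abs_mult)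
      moreover have "\<bar>F i j\<bar> \<le> e"
        using near that by (simp add: F_def)
      ultimately have "\<bar>x i * x j\<bar> * \<bar>F i j\<bar> \<le> ((x i)\<^sup>2 + (x j)\<^sup>2) / 2 * e"
        by (intro mult_mono) auto
      then show ?thesis
        by (simp add: abs_mult)
    qed
    have "\<bar>quadratic_form S F x\<bar> \<le> (\<Sum>i\<in>S. \<bar>\<Sum>j\<in>S. x i * x j * F i j\<bar>)"
      unfolding quadratic_form_def by (rule sum_abs)
    also have "\<dots> \<le> (\<Sum>i\<in>S. \<Sum>j\<in>S. \<bar>x i * x j * F i j\<bar>)"
      by (intro sum_mono sum_abs)
    also have "\<dots> \<le> (\<Sum>i\<in>S. \<Sum>j\<in>S. ((x i)\<^sup>2 + (x j)\<^sup>2) / 2 * e)"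
      by (intro sum_mono term_bound)
    also have "\<dots> = (\<Sum>i\<in>S. \<Sum>j\<in>S. e / 2 * (x i)\<^sup>2 + e / 2 * (x j)\<^sup>2)"
      by (intro sum.cong refl) (simp add: field_simps)
    also have "\<dots> = e / 2 * (\<Sum>i\<in>S. \<Sum>j\<in>S. (x i)\<^sup>2) + e / 2 * (\<Sum>i\<in>S. \<Sum>j\<in>S. (x j)\<^sup>2)"
      by (simp only: sum.distrib sum_distrib_left)
    also have "(\<Sum>i\<in>S. \<Sum>j\<in>S. (x i)\<^sup>2) = real (card S) * N"
      by (simp add: N_def sum_distrib_left)
    also have "(\<Sum>i\<in>S. \<Sum>j\<in>S. (x j)\<^sup>2) = real (card S) * N"
      by (simp add: N_def)
    finally show ?thesis
      by (simp add: mult_ac)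
  qed
  moreover have "real (card S) * e * N < c * N"
    using \<open>N > 0\<close> assms(2) by simp
  ultimately show "quadratic_form S G x > 0"
    by linarith
qed

lemma pos_def_on_one_minus_squares:
  assumes "finite X" "\<forall>x\<in>X. \<delta> x x = 0"
    and "\<forall>x\<in>X. \<forall>y\<in>X. x \<noteq> y \<longrightarrow> \<bar>(\<delta> x y)\<^sup>2 - 1\<bar> < 1 / (real (card X) + 1)"
  shows "pos_def_on X (\<lambda>x y. (1 - (\<delta> x y)\<^sup>2) / 2)"
proof -
  define e where "e = 1 / (real (card X) + 1)"
  have "\<bar>(1 - (\<delta> x y)\<^sup>2) / 2 - (if x = y then 1 / 2 else 0)\<bar> \<le> e / 2" if "x \<in> X" "y \<in> X" for x y
  proof (cases "x = y")
    case True
    then show ?thesis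
      using assms(2) that by (simp add: e_def)
  next
    case False
    then have "\<bar>(\<delta> x y)\<^sup>2 - 1\<bar> < e"
      using assms(3) that by (simp add: e_def)
    with False show ?thesis
      by (simp add: abs_minus_commute)
  qed
  moreover have "real (card X) * (e / 2) < 1 / 2"
    by (simp add: e_def field_simps)
  ultimately show ?thesis
    by (intro pos_def_on_near_scaled_identity[OF assms(1), of "e / 2" "1 / 2"]) auto
qed

lemma pos_def_on_gram_in_euclidean_space:
  assumes "finite X" "card X = CARD('n::finite)" "symmetric_on X G" "pos_def_on X G"
  shows "\<exists>f :: 'a \<Rightarrow> real ^ 'n. \<forall>x\<in>X. \<forall>y\<in>X. inner (f x) (f y) = G x y"
proof -
  obtain v where v: "\<forall>x\<in>X. \<forall>y\<in>X. (\<Sum>k\<in>X. v x k * v y k) = G x y"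
    using pos_def_on_gram_factorisation[OF assms(1,3,4)] by blast
  obtain h :: "'n \<Rightarrow> 'a" where h: "bij_betw h UNIV X"
    using finite_same_card_bij[of "UNIV :: 'n set" X] assms(1,2) by auto
  have "inner (\<chi> k. v x (h k)) (\<chi> k. v y (h k)) = (\<Sum>k\<in>X. v x k * v y k)" for x y
    using sum.reindex_bij_betw[OF h, of "\<lambda>k. v x k * v y k"] by (simp add: inner_vec_def)
  then show ?thesis
    using v by (intro exI[of _ "\<lambda>x. \<chi> k. v x (h k)"]) simp
qed

lemma isometric_embedding_of_gram:
  fixes f :: "'a \<Rightarrow> 'b::real_inner"
  assumes "\<forall>x\<in>X. \<forall>y\<in>X. inner (f x) (f y) = (1 - (\<delta> x y)\<^sup>2) / 2"
    and "\<forall>x\<in>X. \<delta> x x = 0" "\<forall>x\<in>X. \<forall>y\<in>X. 0 \<le> \<delta> x y"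
  shows "isometric_embedding X \<delta> f"
  unfolding isometric_embedding_def
proof (intro ballI)
  fix x y assume "x \<in> X" "y \<in> X"
  have "(dist (f x) (f y))\<^sup>2 = inner (f x) (f x) + inner (f y) (f y) - 2 * inner (f x) (f y)"
    by (simp add: dist_norm power2_norm_eq_inner inner_diff_left inner_diff_right inner_commute)
  also have "\<dots> = (\<delta> x y)\<^sup>2"
  proof -
    have "inner (f x) (f x) = 1 / 2" "inner (f y) (f y) = 1 / 2"
      using assms(1,2) \<open>x \<in> X\<close> \<open>y \<in> X\<close> by auto
    moreover have "inner (f x) (f y) = (1 - (\<delta> x y)\<^sup>2) / 2"
      using assms(1) \<open>x \<in> X\<close> \<open>y \<in> X\<close> by blast
    ultimately show ?thesis
      by (simp add: field_simps)
  qed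
  finally show "dist (f x) (f y) = \<delta> x y"
    using assms(3) \<open>x \<in> X\<close> \<open>y \<in> X\<close> by (simp add: power2_eq_iff_nonneg)
qed

lemma metric_powr_near_one:
  assumes "finite X" "metric_on X d" "e > 0"
  shows "\<exists>\<alpha>. 0 < \<alpha> \<and> \<alpha> < 1 \<and> (\<forall>x\<in>X. \<forall>y\<in>X. x \<noteq> y \<longrightarrow> \<bar>(d x y powr \<alpha>)\<^sup>2 - 1\<bar> < e)"
proof -
  have "\<forall>\<^sub>F \<alpha> in at_right 0. x \<noteq> y \<longrightarrow> \<bar>(d x y powr \<alpha>)\<^sup>2 - 1\<bar> < e" if "x \<in> X" "y \<in> X" for x y
  proof (cases "x = y")
    case False
    then have "d x y > 0"
      using assms(2) that by (auto simp: metric_on_def less_le)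
    then have "((\<lambda>\<alpha>. (d x y powr \<alpha>)\<^sup>2) \<longlongrightarrow> (d x y powr 0)\<^sup>2) (at_right 0)"
      by (intro tendsto_intros) auto
    with \<open>d x y > 0\<close> have "((\<lambda>\<alpha>. (d x y powr \<alpha>)\<^sup>2) \<longlongrightarrow> 1) (at_right 0)"
      by simp
    from tendstoD[OF this \<open>e > 0\<close>] show ?thesis
      by (rule eventually_mono) (simp add: dist_real_def)
  qed simp
  then have "\<forall>\<^sub>F \<alpha> in at_right 0. \<forall>x\<in>X. \<forall>y\<in>X. x \<noteq> y \<longrightarrow> \<bar>(d x y powr \<alpha>)\<^sup>2 - 1\<bar> < e"
    using assms(1) by (simp add: eventually_ball_finite)
  moreover have "\<forall>\<^sub>F \<alpha> in at_right 0. \<alpha> \<in> {0<..<1::real}"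
    by (rule eventually_at_right_real) simp
  ultimately have "\<forall>\<^sub>F \<alpha> in at_right 0.
      (\<forall>x\<in>X. \<forall>y\<in>X. x \<noteq> y \<longrightarrow> \<bar>(d x y powr \<alpha>)\<^sup>2 - 1\<bar> < e) \<and> \<alpha> \<in> {0<..<1}"
    by (rule eventually_conj)
  then show ?thesis
    using eventually_happens'[OF trivial_limit_at_right_real] by fastforce
qed

theorem proposition2p2:
  fixes X :: "'a set" and d :: "'a \<Rightarrow> 'a \<Rightarrow> real"
  assumes "finite X" and "metric_on X d" and "card X = CARD('n::finite)"
  shows "\<exists>\<alpha>::real. 0 < \<alpha> \<and> \<alpha> < 1 \<and>
           (\<exists>f :: 'a \<Rightarrow> real ^ 'n. isometric_embedding X (\<lambda>x y. d x y powr \<alpha>) f)"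
proof -
  obtain \<alpha> where \<alpha>: "0 < \<alpha>" "\<alpha> < 1" and near_one:
      "\<forall>x\<in>X. \<forall>y\<in>X. x \<noteq> y \<longrightarrow> \<bar>(d x y powr \<alpha>)\<^sup>2 - 1\<bar> < 1 / (real (card X) + 1)"
    using metric_powr_near_one[OF assms(1,2), of "1 / (real (card X) + 1)"] by auto
  define G where "G = (\<lambda>x y. (1 - (d x y powr \<alpha>)\<^sup>2) / 2)"
  have zero: "\<forall>x\<in>X. d x x powr \<alpha> = 0"
    using assms(2) by (simp add: metric_on_def)
  have "pos_def_on X G"
    unfolding G_def by (rule pos_def_on_one_minus_squares[OF assms(1) zero near_one])
  moreover have "symmetric_on X G"
    using assms(2) by (simp add: symmetric_on_def G_def metric_on_def)
  ultimately obtain f :: "'a \<Rightarrow> real ^ 'n" where "\<forall>x\<in>X. \<forall>y\<in>X. inner (f x) (f y) = G x y"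
    using pos_def_on_gram_in_euclidean_space[OF assms(1,3)] by blast
  then have "isometric_embedding X (\<lambda>x y. d x y powr \<alpha>) f"
    using zero by (intro isometric_embedding_of_gram) (auto simp: G_def)
  with \<alpha> show ?thesis
    by blast
qed

end
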